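(* Let $P_n$ and $Q_n$ ($n\ge 0$) be the polynomials defined by $P_0(u)=u$, $P_{n+1}(u)=(1+u^2)P_n'(u)$ and $Q_0(u)=1$, $Q_{n+1}(u)=(1+u^2)Q_n'(u)+uQ_n(u)$, so that $\frac{d^n}{dx^n}\tan x=P_n(\tan x)$ and $\frac{d^n}{dx^n}\sec x=\sec x\,Q_n(\tan x)$. For $n\ge1$ let $$W_n(x)=\sum_{\pi\in S_n}x^{\mathrm{pk}(\pi)},\qquad W^{l}_n(x)=\sum_{\pi\in S_n}x^{\mathrm{lpk}(\pi)}.$$ Then for every $n\ge 1$ and every real $u>1$, $$W_n(u)=(u-1)^{\frac{n+1}{2}}u^{-1}P_n\big((u-1)^{-1/2}\big)\quad\text{and}\quad W^{l}_n(u)=(u-1)^{\frac n2}Q_n\big((u-1)^{-1/2}\big).$$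
   Context: $S_n$ is the symmetric group on $[n]=\{1,\dots,n\}$, permutations written $\pi=\pi(1)\cdots\pi(n)$. An interior peak of $\pi$ is an index $i\in\{2,\dots,n-1\}$ with $\pi(i-1)<\pi(i)>\pi(i+1)$; $\mathrm{pk}(\pi)$ is the number of interior peaks. A left peak of $\pi$ is an index $i\in[n-1]$ with $\pi(i-1)<\pi(i)>\pi(i+1)$, where $\pi(0):=0$; $\mathrm{lpk}(\pi)$ is the number of left peaks. Powers of $u-1>0$ denote positive real powers. *)

theory Defs
  imports "HOL-Analysis.Analysis" "HOL-Computational_Algebra.Polynomial"
begin

fun tanP :: "nat \<Rightarrow> real poly" where
  "tanP 0 = [:0, 1:]"
| "tanP (Suc n) = [:1, 0, 1:] * pderiv (tanP n)"

fun secQ :: "nat \<Rightarrow> real poly" where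
  "secQ 0 = [:1:]"
| "secQ (Suc n) = [:1, 0, 1:] * pderiv (secQ n) + [:0, 1:] * secQ n"

definition perms :: "nat \<Rightarrow> (nat \<Rightarrow> nat) set" where
  "perms n = {p. p permutes {1..n}}"

definition pk :: "nat \<Rightarrow> (nat \<Rightarrow> nat) \<Rightarrow> nat" where
  "pk n p = card {i \<in> {2..n-1}. p (i - 1) < p i \<and> p i > p (i + 1)}"

definition lpk :: "nat \<Rightarrow> (nat \<Rightarrow> nat) \<Rightarrow> nat" where
  "lpk n p = card {i \<in> {1..n-1}.
      (if i - 1 = 0 then 0 else p (i - 1)) < p i \<and> p i > p (i + 1)}"

definition W :: "nat \<Rightarrow> real \<Rightarrow> real" where
  "W n x = (\<Sum>p\<in>perms n. x ^ pk n p)"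

definition Wl :: "nat \<Rightarrow> real \<Rightarrow> real" where
  "Wl n x = (\<Sum>p\<in>perms n. x ^ lpk n p)"

end

theory Submission
  imports Defs
begin

(* Insert n + 1 into a permutation of [n] with k peaks at one of its n + 1 slots.  In a slot
   next to an old peak (2k slots) the new letter replaces that peak, in one of the a boundary
   slots it creates none, and in every other slot it adds a peak.  Hence the
   polynomials  sum_pi (1 + x^2)^(k + a - 1) x^(n + 1 - a - 2k)  (k the number of interior peaks
   for a = 2, of left peaks for a = 1) satisfy the recurrences of P_n and Q_n, because
   (1 + x^2) d/dx  sends  (1 + x^2)^r x^m  to  2r (1 + x^2)^r x^(m+1) + m (1 + x^2)^(r+1) x^(m-1).
   At x = (u - 1)^(-1/2) we have 1 + x^2 = u / (u - 1), and every term becomes u^(k + a - 1)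
   times the same power of u - 1. *)

lemma permutes_atLeastAtMost_zero:
  fixes q :: "nat \<Rightarrow> nat"
  shows "q permutes {1..n} \<Longrightarrow> q 0 = 0"
  using permutes_not_in[of q "{1..n}" 0] by simp

lemma permutes_atLeastAtMost_le:
  fixes q :: "nat \<Rightarrow> nat"
  assumes "q permutes {1..n}" "i \<le> n"
  shows "q i \<le> n"
  using assms permutes_in_image[OF assms(1), of i] permutes_atLeastAtMost_zero[OF assms(1)]
  by (cases "i = 0") auto

lemma finite_perms: "finite (perms n)"
  by (simp add: perms_def finite_permutations)

lemma perms_Suc_0: "perms (Suc 0) = {id}"
  by (simp add: perms_def permutes_sing)

text \<open>The word q(1) ... q(n) with the letter n + 1 inserted at position j.\<close>

definition insert_max :: "nat \<Rightarrow> (nat \<Rightarrow> nat) \<Rightarrow> nat \<Rightarrow> nat \<Rightarrow> nat" where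
  "insert_max n q j = (\<lambda>i. if i < j then q i else if i = j then Suc n
                            else if i \<le> Suc n then q (i - 1) else i)"

lemma insert_max_at [simp]: "insert_max n q j j = Suc n"
  by (simp add: insert_max_def)

lemma insert_max_le:
  fixes q :: "nat \<Rightarrow> nat"
  assumes "q permutes {1..n}" "j \<le> Suc n" "i \<le> Suc n" "i \<noteq> j"
  shows "insert_max n q j i \<le> n"
  using assms permutes_atLeastAtMost_le[OF assms(1), of i]
    permutes_atLeastAtMost_le[OF assms(1), of "i - 1"]
  by (auto simp: insert_max_def)

lemma insert_max_permutes:
  fixes q :: "nat \<Rightarrow> nat"
  assumes q: "q permutes {1..n}" and j: "j \<in> {1..Suc n}"
  shows "insert_max n q j permutes {1..Suc n}"
proof (rule bij_imp_permutes)
  show "insert_max n q j x = x" if "x \<notin> {1..Suc n}" for x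
    using that j permutes_atLeastAtMost_zero[OF q] by (cases "x = 0") (auto simp: insert_max_def)
  have max_iff: "insert_max n q j x = Suc n \<longleftrightarrow> x = j" if "x \<in> {1..Suc n}" for x
    using that j insert_max_le[OF q, of j x] by fastforce
  have "inj_on (insert_max n q j) {1..Suc n}"
  proof (rule inj_onI)
    fix x y assume x: "x \<in> {1..Suc n}" and y: "y \<in> {1..Suc n}"
      and eq: "insert_max n q j x = insert_max n q j y"
    then have "x = j \<longleftrightarrow> y = j"
      using max_iff by metis
    moreover have "x = y" if "x \<noteq> j" "y \<noteq> j"
    proof -
      have "q (if x < j then x else x - 1) = q (if y < j then y else y - 1)"
        using that eq x y by (simp add: insert_max_def split: if_splits)
      then have "(if x < j then x else x - 1) = (if y < j then y else y - 1)"
        using permutes_inj[OF q] by (simp add: inj_eq)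
      then show "x = y" using that by (auto split: if_splits)
    qed
    ultimately show "x = y" by blast
  qed
  moreover have "insert_max n q j ` {1..Suc n} \<subseteq> {1..Suc n}"
  proof (rule image_subsetI)
    fix x assume x: "x \<in> {1..Suc n}"
    have "q x \<in> {1..n}" if "x < j" using that x j by (subst permutes_in_image[OF q]) auto
    moreover have "q (x - 1) \<in> {1..n}" if "j < x" using that x j by (subst permutes_in_image[OF q]) auto
    ultimately show "insert_max n q j x \<in> {1..Suc n}"
      using x by (auto simp: insert_max_def)
  qed
  ultimately show "bij_betw (insert_max n q j) {1..Suc n} {1..Suc n}"
    by (simp add: bij_betw_def endo_inj_surj)
qed

lemma inj_on_insert_max:
  "inj_on (\<lambda>(q, j). insert_max n q j) (perms n \<times> {1..Suc n})"
proof (rule inj_onI, clarify)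
  fix q j q' j'
  assume q: "q \<in> perms n" and j: "j \<in> {1..Suc n}" and q': "q' \<in> perms n"
    and j': "j' \<in> {1..Suc n}" and eq: "insert_max n q j = insert_max n q' j'"
  have qp: "q permutes {1..n}" and qp': "q' permutes {1..n}"
    using q q' by (auto simp: perms_def)
  have "insert_max n q' j' j = Suc n"
    using fun_cong[OF eq, of j] by simp
  then have jj: "j = j'"
    using insert_max_le[OF qp', of j' j] j j' by fastforce
  have "q i = q' i" for i
  proof -
    consider "i < j" | "j \<le> i" "i \<le> n" | "n < i" by linarith
    then show ?thesis
    proof cases
      case 1
      then show ?thesis using fun_cong[OF eq, of i] jj by (simp add: insert_max_def)
    next
      case 2
      then show ?thesis using fun_cong[OF eq, of "Suc i"] jj by (simp add: insert_max_def)
    next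
      case 3
      then show ?thesis using permutes_not_in[OF qp, of i] permutes_not_in[OF qp', of i] by auto
    qed
  qed
  then show "q = q' \<and> j = j'" using jj by auto
qed

lemma insert_max_image:
  "(\<lambda>(q, j). insert_max n q j) ` (perms n \<times> {1..Suc n}) = perms (Suc n)"
proof -
  let ?S = "(\<lambda>(q, j). insert_max n q j) ` (perms n \<times> {1..Suc n})"
  have "?S \<subseteq> perms (Suc n)"
    using insert_max_permutes by (auto simp: perms_def)
  moreover have "card ?S = card (perms (Suc n))"
  proof -
    have "card ?S = card (perms n \<times> {1..Suc n})"
      by (rule card_image[OF inj_on_insert_max])
    also have "\<dots> = Suc n * fact n"
      using card_permutations[of "{1..n}" n] by (simp add: perms_def card_cartesian_product)
    also have "\<dots> = card (perms (Suc n))"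
      using card_permutations[of "{1..Suc n}" "Suc n"] by (simp add: perms_def)
    finally show ?thesis .
  qed
  ultimately show ?thesis
    using card_subset_eq[OF finite_perms] by blast
qed

lemma sum_perms_Suc:
  "(\<Sum>p\<in>perms (Suc n). f p) = (\<Sum>q\<in>perms n. \<Sum>j\<in>{1..Suc n}. f (insert_max n q j))"
proof -
  have "(\<Sum>p\<in>perms (Suc n). f p) = (\<Sum>(q, j)\<in>perms n \<times> {1..Suc n}. f (insert_max n q j))"
    unfolding insert_max_image[symmetric, of n]
    by (subst sum.reindex[OF inj_on_insert_max]) (simp add: case_prod_unfold)
  then show ?thesis by (simp only: sum.cartesian_product)
qed

text \<open>Permutations of {1..n} fix 0, so peaks 1 are the left peaks and peaks 2 the interior peaks.\<close>

definition peaks :: "nat \<Rightarrow> nat \<Rightarrow> (nat \<Rightarrow> nat) \<Rightarrow> nat set" where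
  "peaks a n q = {i \<in> {a..n-1}. q (i - 1) < q i \<and> q (i + 1) < q i}"

definition skip :: "nat \<Rightarrow> nat \<Rightarrow> nat" where
  "skip j i = (if i < j then i else Suc i)"

lemma insert_max_skip:
  fixes q :: "nat \<Rightarrow> nat"
  shows "i \<le> n \<Longrightarrow> insert_max n q j (skip j i) = q i"
  by (simp add: insert_max_def skip_def)

lemma max_mem_peaks_insert_max:
  fixes q :: "nat \<Rightarrow> nat"
  assumes q: "q permutes {1..n}" and j: "j \<in> {1..Suc n}"
  shows "j \<in> peaks a (Suc n) (insert_max n q j) \<longleftrightarrow> a \<le> j \<and> j \<le> n"
proof -
  have "insert_max n q j (j - 1) \<le> n" "j \<le> n \<Longrightarrow> insert_max n q j (j + 1) \<le> n"
    using j insert_max_le[OF q] by auto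
  then show ?thesis by (auto simp: peaks_def)
qed

lemma skip_mem_peaks_insert_max:
  fixes q :: "nat \<Rightarrow> nat"
  assumes q: "q permutes {1..n}" and j: "j \<in> {1..Suc n}" and a: "1 \<le> a" "a \<le> 2"
  shows "skip j i \<in> peaks a (Suc n) (insert_max n q j) \<longleftrightarrow> i \<in> peaks a n q - {j - 1, j}"
proof (cases "i \<in> {j - 1, j}")
  case True
  then show ?thesis
    using j insert_max_le[OF q, of j "skip j i"] by (auto simp: peaks_def skip_def)
next
  case False
  show ?thesis
  proof (cases "i = 0")
    case True
    then show ?thesis using a j by (simp add: peaks_def skip_def)
  next
    case i: False
    have "skip j (i - 1) = skip j i - 1" "skip j (i + 1) = skip j i + 1"
      using False i by (auto simp: skip_def)
    moreover have "skip j i \<in> {a..Suc n - 1} \<longleftrightarrow> i \<in> {a..n - 1}"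
      using False i a j by (auto simp: skip_def)
    ultimately show ?thesis
      using False i insert_max_skip[of "i - 1" n q j] insert_max_skip[of i n q j]
        insert_max_skip[of "i + 1" n q j]
      by (auto simp: peaks_def)
  qed
qed

lemma peaks_insert_max:
  fixes q :: "nat \<Rightarrow> nat"
  assumes q: "q permutes {1..n}" and j: "j \<in> {1..Suc n}" and a: "1 \<le> a" "a \<le> 2"
  shows "peaks a (Suc n) (insert_max n q j) =
    skip j ` (peaks a n q - {j - 1, j}) \<union> (if a \<le> j \<and> j \<le> n then {j} else {})"
proof (rule set_eqI)
  fix p
  show "p \<in> peaks a (Suc n) (insert_max n q j) \<longleftrightarrow>
    p \<in> skip j ` (peaks a n q - {j - 1, j}) \<union> (if a \<le> j \<and> j \<le> n then {j} else {})"
  proof (cases "p = j")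
    case True
    have "j \<notin> range (skip j)" by (auto simp: skip_def)
    then show ?thesis using True max_mem_peaks_insert_max[OF q j] by auto
  next
    case False
    then have p: "p = skip j (if p < j then p else p - 1)" by (auto simp: skip_def)
    have "p \<in> skip j ` A \<longleftrightarrow> (if p < j then p else p - 1) \<in> A" for A
      by (subst p) (auto simp: skip_def)
    then show ?thesis
      using False skip_mem_peaks_insert_max[OF q j a, of "if p < j then p else p - 1"] p by auto
  qed
qed

lemma card_peaks_insert_max:
  fixes q :: "nat \<Rightarrow> nat"
  assumes "q permutes {1..n}" "j \<in> {1..Suc n}" "1 \<le> a" "a \<le> 2"
  shows "card (peaks a (Suc n) (insert_max n q j)) =
    card (peaks a n q - {j - 1, j}) + (if a \<le> j \<and> j \<le> n then 1 else 0)"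
proof -
  have "inj (skip j)" by (rule injI) (auto simp: skip_def split: if_splits)
  moreover have "j \<notin> range (skip j)" by (auto simp: skip_def)
  moreover have "finite (peaks a n q)" by (simp add: peaks_def)
  ultimately show ?thesis
    unfolding peaks_insert_max[OF assms]
    by (auto simp: card_insert_if card_image inj_on_subset)
qed

lemma card_Diff_adjacent:
  fixes K :: "nat set"
  assumes "finite K" and no_adj: "\<And>i. i \<in> K \<Longrightarrow> Suc i \<notin> K"
  shows "card (K - {j - 1, j}) = card K - (if j \<in> K \<union> Suc ` K then 1 else 0)"
proof -
  consider "j \<in> K" | "j \<notin> K" "j \<in> Suc ` K" | "j \<notin> K \<union> Suc ` K" by blast
  then show ?thesis
  proof cases
    case 1
    then have "j - 1 \<notin> K \<or> j - 1 = j" using no_adj[of "j - 1"] by (cases j) auto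
    then have "K - {j - 1, j} = K - {j}" by auto
    then show ?thesis using 1 assms(1) by simp
  next
    case 2
    then have "K - {j - 1, j} = K - {j - 1}" "j - 1 \<in> K" by auto
    then show ?thesis using 2 assms(1) by simp
  next
    case 3
    then have "j - 1 \<notin> K" by (cases j) auto
    then have "K - {j - 1, j} = K" using 3 by auto
    then show ?thesis using 3 by simp
  qed
qed

lemma card_Un_Suc_image:
  fixes K :: "nat set"
  assumes "finite K" and "\<And>i. i \<in> K \<Longrightarrow> Suc i \<notin> K"
  shows "card (K \<union> Suc ` K) = 2 * card K"
proof -
  have "K \<inter> Suc ` K = {}" using assms(2) by auto
  then show ?thesis using assms(1) by (simp add: card_Un_disjoint card_image)
qed

lemma card_no_adjacent_le:
  fixes K :: "nat set"
  assumes K: "K \<subseteq> {a..n - 1}" and no_adj: "\<And>i. i \<in> K \<Longrightarrow> Suc i \<notin> K"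
    and a: "1 \<le> a" "a \<le> Suc n"
  shows "2 * card K + a \<le> Suc n"
proof -
  have "finite K" using K finite_subset by blast
  moreover have "K \<union> Suc ` K \<subseteq> {a..n}" using K a by force
  ultimately have "card (K \<union> Suc ` K) \<le> Suc n - a"
    using card_mono[of "{a..n}" "K \<union> Suc ` K"] by simp
  then show ?thesis using card_Un_Suc_image[OF \<open>finite K\<close> no_adj] a by linarith
qed

lemma sum_insertion_slots:
  fixes K :: "nat set" and T :: "nat \<Rightarrow> 'a::comm_ring_1"
  assumes K: "K \<subseteq> {a..n - 1}" and no_adj: "\<And>i. i \<in> K \<Longrightarrow> Suc i \<notin> K"
    and a: "1 \<le> a" "a \<le> Suc n"
  shows "(\<Sum>j\<in>{1..Suc n}. T (card (K - {j - 1, j}) + (if a \<le> j \<and> j \<le> n then 1 else 0)))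
     = of_nat (2 * card K + a) * T (card K) + of_nat (Suc n - a - 2 * card K) * T (Suc (card K))"
proof -
  define Adj where "Adj = K \<union> Suc ` K"
  define B where "B = {a..n} - Adj"
  have fin: "finite K" using K finite_subset by blast
  have Adj_sub: "Adj \<subseteq> {a..n}" unfolding Adj_def using K a by force
  have card_B: "card B = Suc n - a - 2 * card K"
    using card_Diff_subset[OF _ Adj_sub] card_Un_Suc_image[OF fin no_adj] fin
    by (simp add: B_def Adj_def)
  have "B \<subseteq> {1..Suc n}" using a by (auto simp: B_def)
  then have card_not_B: "card ({1..Suc n} - B) = 2 * card K + a"
    using card_B card_Diff_subset[of B "{1..Suc n}"] card_no_adjacent_le[OF K no_adj a]
    by (simp add: B_def)
  have "card K \<ge> 1" if "j \<in> Adj" for j using that fin by (auto simp: Adj_def Suc_le_eq card_gt_0_iff)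
  then have summand: "card (K - {j - 1, j}) + (if a \<le> j \<and> j \<le> n then 1 else 0)
      = (if j \<in> B then Suc (card K) else card K)" for j
    using card_Diff_adjacent[OF fin no_adj, of j] Adj_sub by (auto simp: B_def Adj_def)
  have "(\<Sum>j\<in>{1..Suc n}. T (card (K - {j - 1, j}) + (if a \<le> j \<and> j \<le> n then 1 else 0)))
      = (\<Sum>j\<in>{1..Suc n}. if j \<in> B then T (Suc (card K)) else T (card K))"
    by (rule sum.cong[OF refl], subst summand, simp)
  also have "\<dots> = of_nat (card B) * T (Suc (card K)) + of_nat (card ({1..Suc n} - B)) * T (card K)"
  proof -
    have "{1..Suc n} \<inter> {j. j \<in> B} = B" "{1..Suc n} \<inter> - {j. j \<in> B} = {1..Suc n} - B"
      using \<open>B \<subseteq> {1..Suc n}\<close> by auto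
    then show ?thesis by (simp only: sum.If_cases[OF finite_atLeastAtMost] sum_constant mult.commute)
  qed
  finally show ?thesis by (simp only: card_B card_not_B add.commute)
qed

lemma peaks_subset: "peaks a n q \<subseteq> {a..n - 1}"
  by (auto simp: peaks_def)

lemma peaks_no_adjacent: "i \<in> peaks a n q \<Longrightarrow> Suc i \<notin> peaks a n q"
  by (auto simp: peaks_def)

lemma two_card_peaks_le: "1 \<le> a \<Longrightarrow> a \<le> Suc n \<Longrightarrow> 2 * card (peaks a n q) + a \<le> Suc n"
  by (rule card_no_adjacent_le[OF peaks_subset peaks_no_adjacent])

lemma sum_perms_Suc_peaks:
  fixes T :: "nat \<Rightarrow> 'a::comm_ring_1"
  assumes a: "1 \<le> a" "a \<le> 2" and n: "1 \<le> n"
  shows "(\<Sum>p\<in>perms (Suc n). T (card (peaks a (Suc n) p))) =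
    (\<Sum>q\<in>perms n. of_nat (2 * card (peaks a n q) + a) * T (card (peaks a n q))
       + of_nat (Suc n - a - 2 * card (peaks a n q)) * T (Suc (card (peaks a n q))))"
  unfolding sum_perms_Suc
proof (rule sum.cong[OF refl])
  fix q assume "q \<in> perms n"
  then have q: "q permutes {1..n}" by (simp add: perms_def)
  have "(\<Sum>j\<in>{1..Suc n}. T (card (peaks a (Suc n) (insert_max n q j)))) =
     (\<Sum>j\<in>{1..Suc n}. T (card (peaks a n q - {j - 1, j}) + (if a \<le> j \<and> j \<le> n then 1 else 0)))"
    by (rule sum.cong[OF refl]) (simp add: card_peaks_insert_max[OF q _ a])
  also have "\<dots> = of_nat (2 * card (peaks a n q) + a) * T (card (peaks a n q))
       + of_nat (Suc n - a - 2 * card (peaks a n q)) * T (Suc (card (peaks a n q)))"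
    using a n by (intro sum_insertion_slots[OF peaks_subset peaks_no_adjacent]) auto
  finally show "(\<Sum>j\<in>{1..Suc n}. T (card (peaks a (Suc n) (insert_max n q j)))) = \<dots>" .
qed

lemma pderiv_power_mult_power:
  fixes A X :: "'a::idom poly"
  assumes dA: "pderiv A = smult 2 X" and dX: "pderiv X = 1"
  shows "A * pderiv (A ^ r * X ^ m) =
    smult (of_nat (2 * r)) (A ^ r * X ^ Suc m) + smult (of_nat m) (A ^ Suc r * X ^ (m - 1))"
proof -
  have dAr: "A * pderiv (A ^ r) = smult (of_nat (2 * r)) (A ^ r * X)"
    by (cases r) (simp_all add: pderiv_power_Suc dA mult_ac del: power_Suc, simp add: mult_ac)
  have dXm: "A * pderiv (X ^ m) = smult (of_nat m) (A * X ^ (m - 1))"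
    by (simp add: pderiv_power dX mult_ac)
  have "A * pderiv (A ^ r * X ^ m) = X ^ m * (A * pderiv (A ^ r)) + A ^ r * (A * pderiv (X ^ m))"
    by (simp add: pderiv_mult algebra_simps)
  then show ?thesis
    unfolding dAr dXm by (simp add: mult_ac add.commute)
qed

lemma pderiv_sum: "pderiv (sum f A) = (\<Sum>x\<in>A. pderiv (f x))"
  using higher_pderiv_sum[of 1 f A] by simp

lemma peak_monomial_step:
  fixes A X :: "'a::idom poly"
  assumes dA: "pderiv A = smult 2 X" and dX: "pderiv X = 1"
    and a: "1 \<le> a" "a \<le> 2" and c: "2 * c + a \<le> Suc n"
  shows "A * pderiv (A ^ (c + a - 1) * X ^ (Suc n - a - 2 * c))
           + smult (of_nat (2 - a)) (X * (A ^ (c + a - 1) * X ^ (Suc n - a - 2 * c)))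
       = smult (of_nat (2 * c + a)) (A ^ (c + a - 1) * X ^ (Suc (Suc n) - a - 2 * c))
           + smult (of_nat (Suc n - a - 2 * c)) (A ^ (Suc c + a - 1) * X ^ (Suc (Suc n) - a - 2 * Suc c))"
proof -
  define r where "r = c + a - 1"
  define m where "m = Suc n - a - 2 * c"
  have e: "Suc (Suc n) - a - 2 * c = Suc m" "Suc c + a - 1 = Suc r"
    "Suc (Suc n) - a - 2 * Suc c = m - 1" "2 * c + a = 2 * r + (2 - a)"
    using a c by (auto simp: r_def m_def)
  show ?thesis
    unfolding e r_def[symmetric] m_def[symmetric] pderiv_power_mult_power[OF dA dX]
    by (simp add: smult_add_left mult_ac)
qed

definition peak_poly :: "nat \<Rightarrow> nat \<Rightarrow> real poly" where
  "peak_poly a n = (\<Sum>q\<in>perms n.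
     [:1, 0, 1:] ^ (card (peaks a n q) + a - 1) * [:0, 1:] ^ (Suc n - a - 2 * card (peaks a n q)))"

lemma peak_poly_Suc:
  assumes a: "1 \<le> a" "a \<le> 2" and n: "1 \<le> n"
  shows "peak_poly a (Suc n) =
    [:1, 0, 1:] * pderiv (peak_poly a n) + smult (of_nat (2 - a)) ([:0, 1:] * peak_poly a n)"
proof -
  let ?A = "[:1, 0, 1:] :: real poly" and ?X = "[:0, 1:] :: real poly"
  define T where "T l = ?A ^ (l + a - 1) * ?X ^ (Suc (Suc n) - a - 2 * l)" for l
  have dA: "pderiv ?A = smult 2 ?X" and dX: "pderiv ?X = 1"
    by (simp_all add: pderiv_pCons)
  have "peak_poly a (Suc n) = (\<Sum>p\<in>perms (Suc n). T (card (peaks a (Suc n) p)))"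
    by (simp add: peak_poly_def T_def)
  also have "\<dots> = (\<Sum>q\<in>perms n. smult (of_nat (2 * card (peaks a n q) + a)) (T (card (peaks a n q)))
       + smult (of_nat (Suc n - a - 2 * card (peaks a n q))) (T (Suc (card (peaks a n q)))))"
    unfolding sum_perms_Suc_peaks[OF a n] by (simp only: of_nat_mult_conv_smult)
  also have "\<dots> = (\<Sum>q\<in>perms n.
      ?A * pderiv (?A ^ (card (peaks a n q) + a - 1) * ?X ^ (Suc n - a - 2 * card (peaks a n q)))
      + smult (of_nat (2 - a)) (?X * (?A ^ (card (peaks a n q) + a - 1) * ?X ^ (Suc n - a - 2 * card (peaks a n q)))))"
    unfolding T_def using a n
    by (intro sum.cong refl peak_monomial_step[OF dA dX a, symmetric] two_card_peaks_le) auto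
  also have "\<dots> = ?A * pderiv (peak_poly a n) + smult (of_nat (2 - a)) (?X * peak_poly a n)"
    by (simp add: peak_poly_def pderiv_sum sum_distrib_left sum.distrib flip: of_nat_mult_conv_smult)
  finally show ?thesis .
qed

lemma tanP_eq_peak_poly: "1 \<le> n \<Longrightarrow> tanP n = peak_poly 2 n"
proof (induction n rule: dec_induct)
  case base
  show ?case by (simp add: peak_poly_def perms_Suc_0 peaks_def pderiv_pCons)
next
  case (step n)
  then show ?case by (simp add: peak_poly_Suc)
qed

lemma secQ_eq_peak_poly: "1 \<le> n \<Longrightarrow> secQ n = peak_poly 1 n"
proof (induction n rule: dec_induct)
  case base
  show ?case by (simp add: peak_poly_def perms_Suc_0 peaks_def pderiv_pCons)
next
  case (step n)
  then show ?case by (simp add: peak_poly_Suc)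
qed

lemma power_mult_inverse_power:
  fixes s :: real
  assumes "s > 0"
  shows "s ^ (m + 2 * k) * ((1 + inverse s ^ 2) ^ k * inverse s ^ m) = (1 + s\<^sup>2) ^ k"
proof -
  have "s ^ (m + 2 * k) = s ^ m * (s\<^sup>2) ^ k"
    by (simp add: power_add power_mult)
  then have "s ^ (m + 2 * k) * ((1 + inverse s ^ 2) ^ k * inverse s ^ m)
      = (s * inverse s) ^ m * ((1 + inverse s ^ 2) * s\<^sup>2) ^ k"
    by (simp only: power_mult_distrib mult_ac)
  also have "\<dots> = (1 + s\<^sup>2) ^ k"
  proof -
    have "s * inverse s = 1" "(1 + inverse s ^ 2) * s\<^sup>2 = 1 + s\<^sup>2"
      using assms by (simp_all add: field_simps)
    then show ?thesis by simp
  qed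
  finally show ?thesis .
qed

lemma poly_peak_poly_inverse:
  fixes s :: real
  assumes s: "s > 0" and a: "1 \<le> a" "a \<le> Suc n"
  shows "s ^ (n + a - 1) * poly (peak_poly a n) (inverse s)
    = (1 + s\<^sup>2) ^ (a - 1) * (\<Sum>q\<in>perms n. (1 + s\<^sup>2) ^ card (peaks a n q))"
  unfolding peak_poly_def poly_sum sum_distrib_left
proof (rule sum.cong[OF refl])
  fix q
  define c where "c = card (peaks a n q)"
  have "2 * c + a \<le> Suc n" unfolding c_def using a by (rule two_card_peaks_le)
  then have "n + a - 1 = (Suc n - a - 2 * c) + 2 * (c + a - 1)" using a by simp
  then have "s ^ (n + a - 1) * poly ([:1, 0, 1:] ^ (c + a - 1) * [:0, 1:] ^ (Suc n - a - 2 * c)) (inverse s)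
      = (1 + s\<^sup>2) ^ (c + a - 1)"
    using power_mult_inverse_power[OF s] by (simp add: poly_power power2_eq_square)
  also have "\<dots> = (1 + s\<^sup>2) ^ (a - 1) * (1 + s\<^sup>2) ^ c"
    using a by (simp add: add.commute flip: power_add)
  finally show "s ^ (n + a - 1) * poly ([:1, 0, 1:] ^ (card (peaks a n q) + a - 1)
      * [:0, 1:] ^ (Suc n - a - 2 * card (peaks a n q))) (inverse s)
    = (1 + s\<^sup>2) ^ (a - 1) * (1 + s\<^sup>2) ^ card (peaks a n q)"
    by (simp add: c_def)
qed

lemma pk_eq_card_peaks: "pk n p = card (peaks 2 n p)"
  by (simp add: pk_def peaks_def)

lemma lpk_eq_card_peaks:
  fixes p :: "nat \<Rightarrow> nat"
  assumes "p permutes {1..n}"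
  shows "lpk n p = card (peaks 1 n p)"
  unfolding lpk_def peaks_def
  by (rule arg_cong[where f = card], rule Collect_cong)
    (use permutes_atLeastAtMost_zero[OF assms] in auto)

lemma powr_half_eq_sqrt_power:
  fixes x :: real
  assumes "x > 0"
  shows "x powr (real N / 2) = sqrt x ^ N"
proof -
  have "x powr (real N / 2) = (x powr (1 / 2)) powr real N"
    by (simp add: powr_powr)
  also have "\<dots> = sqrt x ^ N"
    using assms by (simp add: powr_half_sqrt powr_realpow)
  finally show ?thesis .
qed

lemma powr_minus_half_eq_inverse_sqrt:
  fixes x :: real
  assumes "x > 0"
  shows "x powr (-1/2) = inverse (sqrt x)"
proof -
  have "x powr (-1/2) = inverse (x powr (1/2))"
    by (simp add: powr_minus[symmetric])
  then show ?thesis using assms by (simp add: powr_half_sqrt)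
qed

theorem mainTheorem2:
  fixes n :: nat and u :: real
  assumes "n \<ge> 1" and "u > 1"
  shows "W n u = (u - 1) powr ((real n + 1) / 2) * inverse u
                 * poly (tanP n) ((u - 1) powr (-1/2))
       \<and> Wl n u = (u - 1) powr (real n / 2) * poly (secQ n) ((u - 1) powr (-1/2))"
proof -
  define s where "s = sqrt (u - 1)"
  have s: "s > 0" and u: "u = 1 + s\<^sup>2"
    using assms(2) by (simp_all add: s_def)
  have powr_s: "(u - 1) powr (real N / 2) = s ^ N" for N
    using assms(2) by (simp add: s_def powr_half_eq_sqrt_power)
  have inv_s: "(u - 1) powr (-1/2) = inverse s"
    using powr_minus_half_eq_inverse_sqrt[of "u - 1"] assms(2) by (simp add: s_def)
  have "u * W n u = s ^ Suc n * poly (tanP n) (inverse s)"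
    using poly_peak_poly_inverse[OF s, of 2 n] assms(1)
    by (simp add: W_def pk_eq_card_peaks tanP_eq_peak_poly u)
  then have "W n u = s ^ Suc n * inverse u * poly (tanP n) (inverse s)"
    using assms(2) by (simp add: field_simps)
  moreover have "Wl n u = s ^ n * poly (secQ n) (inverse s)"
    using poly_peak_poly_inverse[OF s, of 1 n] assms(1)
    by (simp add: Wl_def perms_def lpk_eq_card_peaks secQ_eq_peak_poly u)
  ultimately show ?thesis
    using powr_s[of n] powr_s[of "Suc n"] inv_s by (simp add: add.commute)
qed

end
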